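(* There is a constant $c$ such that for every $\ell\in\mathbb N$ and every finite alphabet $\Gamma_2$ disjoint from $\Gamma_1=\{0,1,\mathsf{inc},\mathsf{dec}\}$, there are $\ell$ DFAs $B_1,\dots,B_\ell$ over $\Gamma_1\cup\Gamma_2$, each with at most $c\cdot\ell$ states, such that $L_\ell=\bigcap_{i=1}^{\ell}L(B_i)$.
   Context: For a word $b_1b_2\cdots b_\ell\in\{0,1\}^\ell$ let $\mathsf{val}(b_1\cdots b_\ell)=\sum_i b_i 2^{\ell-i}$. Interpret $\mathsf{inc}(n)=n+1$, $\mathsf{dec}(n)=n-1$ and $a(n)=n$ for $a\in\Gamma_2$. Then $L_\ell$ is the set of words $n_0o_1n_1o_2n_2\cdots o_kn_k$ with $k\ge 0$, each $n_i\in\{0,1\}^\ell$, each $o_i\in\{\mathsf{inc},\mathsf{dec}\}\cup\Gamma_2$, and $\mathsf{val}(n_i)\equiv o_i(\mathsf{val}(n_{i-1}))\pmod{2^\ell}$ for all $0<i\le k$. *)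

theory Defs
  imports Main
begin

text \<open>Symbols of the alphabet Gamma_1 \<union> Gamma_2: the four letters of Gamma_1 = {0,1,inc,dec}
  and the letters of Gamma_2, tagged by the constructor Oth (so the two parts are disjoint).\<close>
datatype 'a sym = Zero | One | Inc | Dec | Oth 'a

definition Sigma :: "'a set \<Rightarrow> 'a sym set" where
  "Sigma G2 = {Zero, One, Inc, Dec} \<union> Oth ` G2"

record 's dfa =
  init :: nat
  trans :: "nat \<Rightarrow> 's \<Rightarrow> nat"
  accept :: "nat set"
  Q :: "nat set"

definition wf_dfa :: "'s set \<Rightarrow> 's dfa \<Rightarrow> bool" where
  "wf_dfa S A \<longleftrightarrow> finite (Q A) \<and> init A \<in> Q A \<and> accept A \<subseteq> Q A \<and>
     (\<forall>q\<in>Q A. \<forall>s\<in>S. trans A q s \<in> Q A)"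

definition dfa_lang :: "'s set \<Rightarrow> 's dfa \<Rightarrow> 's list set" where
  "dfa_lang S A = {w. set w \<subseteq> S \<and> foldl (trans A) (init A) w \<in> accept A}"

definition val :: "bool list \<Rightarrow> int" where
  "val bs = foldl (\<lambda>acc b. 2 * acc + (if b then 1 else 0)) 0 bs"

definition bits :: "bool list \<Rightarrow> 'a sym list" where
  "bits bs = map (\<lambda>b. if b then One else Zero) bs"

fun opval :: "'a sym \<Rightarrow> int \<Rightarrow> int" where
  "opval Inc n = n + 1"
| "opval Dec n = n - 1"
| "opval _ n = n"

definition encode :: "bool list list \<Rightarrow> 'a sym list \<Rightarrow> 'a sym list" where
  "encode ns os = bits (ns ! 0) @ concat (map (\<lambda>i. os ! i # bits (ns ! (i + 1))) [0..<length os])"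

definition Lang :: "nat \<Rightarrow> 'a set \<Rightarrow> 'a sym list set" where
  "Lang l G2 = {encode ns os | ns os.
      length ns = length os + 1 \<and>
      (\<forall>n\<in>set ns. length n = l) \<and>
      (\<forall>x\<in>set os. x \<in> {Inc, Dec} \<union> Oth ` G2) \<and>
      (\<forall>i<length os. val (ns ! (i + 1)) mod 2 ^ l = opval (os ! i) (val (ns ! i)) mod 2 ^ l)}"

end

theory Submission
  imports Defs "HOL-Library.Countable" "HOL-Library.Cardinality"
begin

(* Write each n_i most significant bit first. Modulo 2^l, adding 1 to n flips bit k exactly when
   all bits of n after position k are 1, subtracting 1 flips it exactly when they are all 0, and
   the letters of Gamma_2 flip nothing. So the congruence between consecutive blocks splits into
   l bitwise conditions. The k-th one is checked by a DFA that remembers its position in the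
   current block (l + 1 values), the value that bit k of the block must have, the actual bit k,
   and whether the bits after it are all 1 or all 0: 24 l + 25 states. *)

definition dfa_of :: "'q::countable \<Rightarrow> ('q \<Rightarrow> 's \<Rightarrow> 'q) \<Rightarrow> 'q set \<Rightarrow> 'q set \<Rightarrow> 's dfa" where
  "dfa_of q0 \<delta> F D =
     \<lparr>init = to_nat q0, trans = \<lambda>n x. to_nat (\<delta> (from_nat n) x), accept = to_nat ` F, Q = to_nat ` D\<rparr>"

lemma foldl_trans_dfa_of:
  "foldl (trans (dfa_of q0 \<delta> F D)) (to_nat q) w = to_nat (foldl \<delta> q w)"
  by (induction w arbitrary: q) (simp_all add: dfa_of_def)

lemma dfa_lang_dfa_of:
  "dfa_lang S (dfa_of q0 \<delta> F D) = {w. set w \<subseteq> S \<and> foldl \<delta> q0 w \<in> F}"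
  using foldl_trans_dfa_of[of q0 \<delta> F D q0]
  by (simp add: dfa_lang_def dfa_of_def inj_image_mem_iff)

lemma wf_dfa_of:
  assumes "finite D" "q0 \<in> D" "F \<subseteq> D" "\<And>q x. q \<in> D \<Longrightarrow> x \<in> S \<Longrightarrow> \<delta> q x \<in> D"
  shows "wf_dfa S (dfa_of q0 \<delta> F D)"
  using assms by (auto simp: wf_dfa_def dfa_of_def)

lemma card_Q_dfa_of: "card (Q (dfa_of q0 \<delta> F D)) = card D"
  by (simp add: dfa_of_def card_image)

lemma val_snoc: "val (xs @ [b]) = 2 * val xs + (if b then 1 else 0)"
  by (simp add: val_def)

lemma val_nonneg: "0 \<le> val xs"
  by (induction xs rule: rev_induct) (simp_all add: val_snoc, simp add: val_def)

lemma val_less: "val xs < 2 ^ length xs"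
  by (induction xs rule: rev_induct) (simp_all add: val_snoc, simp add: val_def)

lemma val_mod_self: "val xs mod 2 ^ length xs = val xs"
  by (simp add: val_nonneg val_less)

lemma val_inj:
  assumes "length xs = length ys" and "val xs = val ys"
  shows "xs = ys"
  using assms
proof (induction xs ys rule: rev_induct2)
  case (4 x xs y ys)
  then show ?case by (simp add: val_snoc split: if_splits; presburger)
qed simp_all

lemma double_add_mod_double:
  fixes a m r :: int
  assumes "0 \<le> m" and "r \<in> {0, 1}"
  shows "(2 * a + r) mod (2 * m) = 2 * (a mod m) + r"
  using zmod_zmult2_eq[OF assms(1), of "2 * a + r" 2] assms(2) by auto

definition all_after :: "bool \<Rightarrow> bool list \<Rightarrow> nat \<Rightarrow> bool" where
  "all_after b xs k \<longleftrightarrow> (\<forall>j. k < j \<and> j < length xs \<longrightarrow> xs ! j = b)"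

lemma all_after_snoc:
  "k < length xs \<Longrightarrow> all_after b (xs @ [y]) k \<longleftrightarrow> all_after b xs k \<and> y = b"
  by (auto simp: all_after_def nth_append less_Suc_eq)

lemma all_after_last: "all_after b (xs @ [y]) (length xs)"
  by (auto simp: all_after_def)

definition ripple :: "bool \<Rightarrow> bool list \<Rightarrow> bool list" where
  "ripple c xs = map (\<lambda>k. xs ! k \<noteq> all_after c xs k) [0..<length xs]"

lemma nth_ripple: "k < length xs \<Longrightarrow> ripple c xs ! k = (xs ! k \<noteq> all_after c xs k)"
  by (simp add: ripple_def)

lemma ripple_snoc:
  "ripple c (xs @ [b]) = (if b = c then ripple c xs @ [\<not> b] else xs @ [\<not> b])"
  by (rule nth_equalityI)
    (auto simp: ripple_def nth_ripple nth_append all_after_snoc all_after_last less_Suc_eq)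

lemma val_ripple: "val (ripple c xs) = (val xs + (if c then 1 else - 1)) mod 2 ^ length xs"
proof (induction xs rule: rev_induct)
  case Nil
  then show ?case by (simp add: ripple_def val_def)
next
  case (snoc b xs)
  define v d where "v = val xs" and "d = (if c then 1 else - 1 :: int)"
  define M :: int where "M = 2 ^ length xs"
  have M: "0 \<le> M" "0 \<le> v" "2 * v + 1 < 2 * M"
    using val_less[of xs] val_nonneg[of xs] by (simp_all add: M_def v_def)
  have IH: "val (ripple c xs) = (v + d) mod M"
    by (simp add: snoc.IH v_def d_def M_def)
  have "val (ripple c (xs @ [b])) = (2 * v + (if b then 1 else 0) + d) mod (2 * M)"
  proof (cases "b = c")
    case True
    then have "val (ripple c (xs @ [b])) = 2 * ((v + d) mod M) + (if c then 0 else 1)"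
      by (simp add: ripple_snoc val_snoc IH)
    also have "\<dots> = (2 * (v + d) + (if c then 0 else 1)) mod (2 * M)"
      by (rule double_add_mod_double[OF M(1), symmetric]) simp
    finally show ?thesis using True by (simp add: d_def algebra_simps)
  next
    case False
    then have "val (ripple c (xs @ [b])) = 2 * v + (if c then 1 else 0)"
      by (simp add: ripple_snoc val_snoc v_def)
    then show ?thesis using False M by (simp add: d_def)
  qed
  then show ?case by (simp add: val_snoc v_def d_def M_def)
qed

fun carry :: "'a sym \<Rightarrow> bool \<Rightarrow> bool \<Rightarrow> bool" where
  "carry Inc all_ones all_zeros = all_ones"
| "carry Dec all_ones all_zeros = all_zeros"
| "carry _ all_ones all_zeros = False"

definition op_bits :: "'a sym \<Rightarrow> bool list \<Rightarrow> bool list" where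
  "op_bits x xs = map (\<lambda>k. xs ! k \<noteq> carry x (all_after True xs k) (all_after False xs k)) [0..<length xs]"

lemma length_op_bits [simp]: "length (op_bits x xs) = length xs"
  by (simp add: op_bits_def)

lemma nth_op_bits:
  "k < length xs \<Longrightarrow> op_bits x xs ! k = (xs ! k \<noteq> carry x (all_after True xs k) (all_after False xs k))"
  by (simp add: op_bits_def)

lemma val_op_bits: "val (op_bits x xs) = opval x (val xs) mod 2 ^ length xs"
proof (cases x)
  case Inc
  then have "op_bits x xs = ripple True xs"
    by (simp add: op_bits_def ripple_def)
  then show ?thesis using Inc by (simp add: val_ripple)
next
  case Dec
  then have "op_bits x xs = ripple False xs"
    by (simp add: op_bits_def ripple_def)
  then show ?thesis using Dec by (simp add: val_ripple)
qed (simp_all add: op_bits_def val_mod_self map_nth)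

lemma opval_mod_iff_op_bits:
  assumes "length ys = length xs"
  shows "val ys mod 2 ^ length xs = opval x (val xs) mod 2 ^ length xs \<longleftrightarrow> ys = op_bits x xs"
  using assms val_mod_self[of ys] val_op_bits[of x xs] val_inj[of ys "op_bits x xs"] by auto

lemma encode_Nil: "encode (n # ns) [] = bits n"
  by (simp add: encode_def)

lemma encode_Cons: "encode (n # ns) (x # os) = bits n @ x # encode ns os"
proof -
  have "[0..<Suc (length os)] = 0 # map Suc [0..<length os]"
    by (simp add: upt_conv_Cons map_Suc_upt del: upt_Suc)
  then show ?thesis
    by (simp add: encode_def o_def del: upt_Suc)
qed

lemma encode_Cons_bit:
  "encode ((b # n) # ns) os = (if b then One else Zero) # encode (n # ns) os"
  by (simp add: encode_def bits_def)

definition well_formed :: "nat \<Rightarrow> bool list list \<Rightarrow> 'a sym list \<Rightarrow> bool" where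
  "well_formed l ns os \<longleftrightarrow> length ns = length os + 1 \<and> (\<forall>n\<in>set ns. length n = l) \<and>
     (\<forall>x\<in>set os. x \<noteq> Zero \<and> x \<noteq> One)"

lemma set_encode_subset: "length ns = length os + 1 \<Longrightarrow> set (encode ns os) \<subseteq> {Zero, One} \<union> set os"
proof (induction os arbitrary: ns)
  case Nil
  then obtain n where "ns = [n]" by (cases ns) auto
  then show ?case by (auto simp: encode_Nil bits_def)
next
  case (Cons x os)
  then obtain n ns' where "ns = n # ns'" "length ns' = length os + 1" by (cases ns) auto
  then show ?case using Cons.IH[of ns'] by (auto simp: encode_Cons bits_def)
qed

lemma set_subset_encode: "length ns = length os + 1 \<Longrightarrow> set os \<subseteq> set (encode ns os)"
proof (induction os arbitrary: ns)
  case (Cons x os)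
  then obtain n ns' where "ns = n # ns'" "length ns' = length os + 1" by (cases ns) auto
  then show ?case using Cons.IH[of ns'] by (auto simp: encode_Cons)
qed simp

lemma mem_Lang_iff:
  "w \<in> Lang l G2 \<longleftrightarrow> set w \<subseteq> Sigma G2 \<and>
    (\<exists>ns os. well_formed l ns os \<and> w = encode ns os \<and> (\<forall>i<length os. ns ! Suc i = op_bits (os ! i) (ns ! i)))"
    (is "_ \<longleftrightarrow> _ \<and> (\<exists>ns os. ?parse ns os)")
proof -
  have step_iff: "val (ns ! (i + 1)) mod 2 ^ l = opval (os ! i) (val (ns ! i)) mod 2 ^ l \<longleftrightarrow>
      ns ! Suc i = op_bits (os ! i) (ns ! i)"
    if "length ns = length os + 1" "\<forall>n\<in>set ns. length n = l" "i < length os" for ns os i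
    using that opval_mod_iff_op_bits[of "ns ! Suc i" "ns ! i" "os ! i"] by simp
  show ?thesis
  proof
    assume "w \<in> Lang l G2"
    then obtain ns os where w: "w = encode ns os" and len: "length ns = length os + 1"
      and blocks: "\<forall>n\<in>set ns. length n = l" and ops: "\<forall>x\<in>set os. x \<in> {Inc, Dec} \<union> Oth ` G2"
      and cong: "\<forall>i<length os. val (ns ! (i + 1)) mod 2 ^ l = opval (os ! i) (val (ns ! i)) mod 2 ^ l"
      unfolding Lang_def by blast
    have "set w \<subseteq> Sigma G2"
      using set_encode_subset[OF len] ops by (auto simp: w Sigma_def)
    moreover have "?parse ns os"
      using len blocks ops cong step_iff[OF len blocks] by (auto simp: w well_formed_def)
    ultimately show "set w \<subseteq> Sigma G2 \<and> (\<exists>ns os. ?parse ns os)"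
      by blast
  next
    assume "set w \<subseteq> Sigma G2 \<and> (\<exists>ns os. ?parse ns os)"
    then obtain ns os where "set w \<subseteq> Sigma G2" "w = encode ns os" "?parse ns os"
      by blast
    then have len: "length ns = length os + 1" and blocks: "\<forall>n\<in>set ns. length n = l"
      and "\<forall>x\<in>set os. x \<noteq> Zero \<and> x \<noteq> One" "set os \<subseteq> Sigma G2"
      using set_subset_encode[of ns os] by (auto simp: well_formed_def)
    then have "\<forall>x\<in>set os. x \<in> {Inc, Dec} \<union> Oth ` G2"
      by (auto simp: Sigma_def)
    moreover have "\<forall>i<length os. val (ns ! (i + 1)) mod 2 ^ l = opval (os ! i) (val (ns ! i)) mod 2 ^ l"
      using \<open>?parse ns os\<close> step_iff[OF len blocks] by simp
    ultimately show "w \<in> Lang l G2"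
      unfolding Lang_def using \<open>w = encode ns os\<close> len blocks by blast
  qed
qed

(* Some (p, e, c, a1, a0): p bits of the current block have been read, e is the value bit k of
   this block must have (None in the first block), c is its bit k, and a1 / a0 tell whether the
   bits read after position k are all 1 / all 0 (they are reset when bit k is read, so their
   values before that do not matter). None is the rejecting sink. *)
type_synonym bit_state = "(nat \<times> bool option \<times> bool \<times> bool \<times> bool) option"

definition block_start :: "bool option \<Rightarrow> bit_state" where
  "block_start e = Some (0, e, False, False, False)"

fun bit_step :: "nat \<Rightarrow> nat \<Rightarrow> bit_state \<Rightarrow> 'a sym \<Rightarrow> bit_state" where
  "bit_step l k None x = None"
| "bit_step l k (Some (p, e, c, a1, a0)) x =
    (if x = Zero \<or> x = One then
       if l \<le> p then None
       else if p = k then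
         (if e = None \<or> e = Some (x = One) then Some (Suc p, e, x = One, True, True) else None)
       else Some (Suc p, e, c, a1 \<and> x = One, a0 \<and> x = Zero)
     else if p = l then block_start (Some (c \<noteq> carry x a1 a0))
     else None)"

definition bit_states :: "nat \<Rightarrow> bit_state set" where
  "bit_states l = insert None (Some ` ({..l} \<times> UNIV))"

definition bit_final :: "nat \<Rightarrow> bit_state set" where
  "bit_final l = Some ` ({l} \<times> UNIV)"

definition bit_checker :: "nat \<Rightarrow> nat \<Rightarrow> 'a sym dfa" where
  "bit_checker l k = dfa_of (block_start None) (bit_step l k) (bit_final l) (bit_states l)"

lemma foldl_bit_step_None [simp]: "foldl (bit_step l k) None w = None"
  by (induction w) simp_all

lemma bit_step_bit_states: "q \<in> bit_states l \<Longrightarrow> bit_step l k q x \<in> bit_states l"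
  by (cases "(l, k, q, x)" rule: bit_step.cases) (auto simp: bit_states_def block_start_def)

lemma card_bit_states: "card (bit_states l) = 24 * l + 25"
proof -
  have "CARD(bool option \<times> bool \<times> bool \<times> bool) = 24"
    by (simp add: card_UNIV_option)
  then have "card ({..l} \<times> (UNIV :: (bool option \<times> bool \<times> bool \<times> bool) set)) = 24 * l + 24"
    by (simp add: card_cartesian_product)
  then show ?thesis
    by (simp add: bit_states_def card_image)
qed

lemma wf_bit_checker: "wf_dfa S (bit_checker l k)"
  unfolding bit_checker_def
  by (rule wf_dfa_of[OF _ _ _ bit_step_bit_states])
    (auto simp: bit_states_def bit_final_def block_start_def)

lemma card_bit_checker: "card (Q (bit_checker l k)) = 24 * l + 25"
  by (simp add: bit_checker_def card_Q_dfa_of card_bit_states)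

lemma dfa_lang_bit_checker:
  "dfa_lang S (bit_checker l k) = {w. set w \<subseteq> S \<and> foldl (bit_step l k) (block_start None) w \<in> bit_final l}"
  by (simp add: bit_checker_def dfa_lang_dfa_of)

lemma bits_snoc: "bits (xs @ [b]) = bits xs @ [if b then One else Zero]"
  by (simp add: bits_def)

lemma foldl_bit_step_bits:
  assumes "length xs \<le> l"
  shows "foldl (bit_step l k) (block_start e) (bits xs) =
    (if length xs \<le> k then Some (length xs, e, False, False, False)
     else if e = None \<or> e = Some (xs ! k)
     then Some (length xs, e, xs ! k, all_after True xs k, all_after False xs k)
     else None)"
  using assms
proof (induction xs rule: rev_induct)
  case Nil
  then show ?case by (simp add: bits_def block_start_def)
next
  case (snoc b xs)
  then have "length xs < l" by simp
  note IH = snoc.IH[OF less_imp_le[OF this]]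
  consider (before) "length xs < k" | (at) "length xs = k"
    | (after) "k < length xs" "e = None \<or> e = Some (xs ! k)"
    | (mismatch) "k < length xs" "\<not> (e = None \<or> e = Some (xs ! k))"
    by linarith
  then show ?case
  proof cases
    case before
    then show ?thesis using IH \<open>length xs < l\<close> by (simp add: bits_snoc)
  next
    case at
    then show ?thesis using IH \<open>length xs < l\<close> by (auto simp: bits_snoc nth_append all_after_last)
  next
    case after
    then have "foldl (bit_step l k) (block_start e) (bits xs :: 'a sym list) =
      Some (length xs, e, xs ! k, all_after True xs k, all_after False xs k)"
      using IH by simp
    then show ?thesis
      using after \<open>length xs < l\<close> by (simp add: bits_snoc nth_append all_after_snoc)
  next
    case mismatch
    then have "foldl (bit_step l k) (block_start e) (bits xs :: 'a sym list) = None"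
      using IH by simp
    then show ?thesis
      using mismatch by (simp add: bits_snoc nth_append)
  qed
qed

lemma bit_checker_accepts_encode_iff:
  assumes "k < l" and "well_formed l ns os"
  shows "foldl (bit_step l k) (block_start e) (encode ns os) \<in> bit_final l \<longleftrightarrow>
    (e = None \<or> e = Some (ns ! 0 ! k)) \<and> (\<forall>i<length os. ns ! Suc i ! k = op_bits (os ! i) (ns ! i) ! k)"
  using assms(2)
proof (induction os arbitrary: ns e)
  case Nil
  then obtain n where "ns = [n]" "length n = l"
    by (auto simp: well_formed_def length_Suc_conv)
  then show ?case
    using assms(1) by (simp add: encode_Nil foldl_bit_step_bits bit_final_def)
next
  case (Cons x os)
  then obtain n ns' where ns: "ns = n # ns'" and "length n = l" and "x \<noteq> Zero" "x \<noteq> One"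
    and wf: "well_formed l ns' os"
    by (auto simp: well_formed_def length_Suc_conv)
  show ?case
  proof (cases "e = None \<or> e = Some (n ! k)")
    case True
    let ?e' = "op_bits x n ! k"
    have "foldl (bit_step l k) (block_start e) (encode ns (x # os)) =
      foldl (bit_step l k) (block_start (Some ?e')) (encode ns' os)"
      using True assms(1) \<open>length n = l\<close> \<open>x \<noteq> Zero\<close> \<open>x \<noteq> One\<close>
      by (simp add: ns encode_Cons foldl_bit_step_bits nth_op_bits)
    then show ?thesis
      using True Cons.IH[OF wf, of "Some ?e'"] by (auto simp: ns All_less_Suc2)
  next
    case False
    then show ?thesis
      using assms(1) \<open>length n = l\<close>
      by (auto simp: ns encode_Cons foldl_bit_step_bits bit_final_def)
  qed
qed

lemma encode_of_accepted:
  assumes "foldl (bit_step l k) (Some (p, e, c, a1, a0)) w \<in> bit_final l"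
  shows "\<exists>n ns os. w = encode (n # ns) os \<and> length n = l - p \<and> length ns = length os \<and>
    (\<forall>m\<in>set ns. length m = l) \<and> (\<forall>x\<in>set os. x \<noteq> Zero \<and> x \<noteq> One)"
  using assms
proof (induction w arbitrary: p e c a1 a0)
  case Nil
  then have "p = l" by (auto simp: bit_final_def)
  then show ?case
    by (intro exI[of _ "[]"]) (simp add: encode_Nil bits_def)
next
  case (Cons x w)
  obtain p' e' c' a1' a0' where step: "bit_step l k (Some (p, e, c, a1, a0)) x = Some (p', e', c', a1', a0')"
    using Cons.prems by (cases "bit_step l k (Some (p, e, c, a1, a0)) x") (auto simp: bit_final_def)
  then obtain n ns os where IH: "w = encode (n # ns) os" "length n = l - p'" "length ns = length os"
    "\<forall>m\<in>set ns. length m = l" "\<forall>x\<in>set os. x \<noteq> Zero \<and> x \<noteq> One"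
    using Cons.IH[of p' e' c' a1' a0'] Cons.prems by (simp only: foldl_Cons step) blast
  show ?case
  proof (cases "x = Zero \<or> x = One")
    case True
    with step have "p < l" "p' = Suc p"
      by (auto split: if_splits)
    then show ?thesis
      using True IH by (intro exI[of _ "(x = One) # n"] exI[of _ ns] exI[of _ os]) (auto simp: encode_Cons_bit)
  next
    case False
    with step have "p = l" "p' = 0"
      by (auto simp: block_start_def split: if_splits)
    then show ?thesis
      using False IH by (intro exI[of _ "[]"] exI[of _ "n # ns"] exI[of _ "x # os"]) (simp add: encode_Cons bits_def)
  qed
qed

lemma Lang_eq_Inter_bit_checkers:
  assumes "0 < l"
  shows "Lang l G2 = (\<Inter>k<l. dfa_lang (Sigma G2) (bit_checker l k))"
proof (intro equalityI subsetI)
  fix w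
  assume "w \<in> Lang l G2"
  then obtain ns os where "set w \<subseteq> Sigma G2" "well_formed l ns os" "w = encode ns os"
    "\<forall>i<length os. ns ! Suc i = op_bits (os ! i) (ns ! i)"
    by (auto simp: mem_Lang_iff)
  then show "w \<in> (\<Inter>k<l. dfa_lang (Sigma G2) (bit_checker l k))"
    by (simp add: dfa_lang_bit_checker bit_checker_accepts_encode_iff)
next
  fix w
  assume "w \<in> (\<Inter>k<l. dfa_lang (Sigma G2) (bit_checker l k))"
  then have "set w \<subseteq> Sigma G2"
    and accepted: "\<And>k. k < l \<Longrightarrow> foldl (bit_step l k) (block_start None) w \<in> bit_final l"
    using assms by (auto simp: dfa_lang_bit_checker)
  \<comment> \<open>Any single checker forces the block structure; checker k then certifies bit k of every step.\<close>
  obtain ns os where "w = encode ns os" and wf: "well_formed l ns os"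
    using encode_of_accepted[OF accepted[OF assms, unfolded block_start_def]]
    by (fastforce simp: well_formed_def)
  have "ns ! Suc i = op_bits (os ! i) (ns ! i)" if "i < length os" for i
  proof (rule nth_equalityI)
    show "length (ns ! Suc i) = length (op_bits (os ! i) (ns ! i))"
      using wf that by (simp add: well_formed_def)
    show "ns ! Suc i ! k = op_bits (os ! i) (ns ! i) ! k" if "k < length (ns ! Suc i)" for k
      using that \<open>i < length os\<close> wf accepted[of k] bit_checker_accepts_encode_iff[OF _ wf]
      by (simp add: \<open>w = encode ns os\<close> well_formed_def)
  qed
  then show "w \<in> Lang l G2"
    using \<open>set w \<subseteq> Sigma G2\<close> \<open>w = encode ns os\<close> wf by (auto simp: mem_Lang_iff)
qed

theorem claim4p7:
  shows "\<exists>c::nat. \<forall>l::nat. l \<ge> 1 \<longrightarrow> (\<forall>G2 :: 'a set. finite G2 \<longrightarrow>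
     (\<exists>B :: nat \<Rightarrow> 'a sym dfa.
        (\<forall>i\<in>{1..l}. wf_dfa (Sigma G2) (B i) \<and> card (Q (B i)) \<le> c * l) \<and>
        Lang l G2 = (\<Inter>i\<in>{1..l}. dfa_lang (Sigma G2) (B i))))"
proof (intro exI[of _ 49] allI impI)
  fix l :: nat and G2 :: "'a set"
  assume "1 \<le> l"
  let ?B = "\<lambda>i. bit_checker l (i - 1) :: 'a sym dfa"
  have "(\<Inter>i\<in>{1..l}. dfa_lang (Sigma G2) (?B i)) = (\<Inter>k<l. dfa_lang (Sigma G2) (bit_checker l k))"
    unfolding image_Suc_lessThan[symmetric] image_image diff_Suc_1 ..
  then have "Lang l G2 = (\<Inter>i\<in>{1..l}. dfa_lang (Sigma G2) (?B i))"
    using Lang_eq_Inter_bit_checkers[of l G2] \<open>1 \<le> l\<close> by simp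
  moreover have "wf_dfa (Sigma G2) (?B i) \<and> card (Q (?B i)) \<le> 49 * l" for i
    using \<open>1 \<le> l\<close> by (simp add: wf_bit_checker card_bit_checker)
  ultimately show "\<exists>B :: nat \<Rightarrow> 'a sym dfa.
      (\<forall>i\<in>{1..l}. wf_dfa (Sigma G2) (B i) \<and> card (Q (B i)) \<le> 49 * l) \<and>
      Lang l G2 = (\<Inter>i\<in>{1..l}. dfa_lang (Sigma G2) (B i))"
    by (intro exI[of _ ?B]) blast
qed

end
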